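(* Let $D$ be an E-simple domain with maximal subfield $K$, and let $R=R(D)$. Let $f\in D\setminus K$ be such that $R/\mathfrak p_f$ is a discrete valuation ring in which the image of $\frac1f$ is irreducible. Then for $g\in D\setminus\{0\}$, we have $\frac1g\notin\mathfrak p_f$ if and only if $g\in K[f]$. In particular, $R(D)=R(K[f])+\mathfrak p_f$ and $R(K[f])\cap\mathfrak p_f=(0)$.
   Context: For an integral domain $A$ with fraction field $F$, the reciprocal complement $R(A)$ is the subring of $F$ generated by all $1/a$, $a\in A\setminus\{0\}$ (here $R(K[f])\subseteq R(D)\subseteq\operatorname{Frac}D$). An element $d\in D$ is Egyptian if $d\in R(D)$. $D$ is E-simple if every Egyptian element is a unit; then the Egyptian elements together with $0$ form a subfield $K$, the maximal subfield. For nonzero $f\in D$, $\mathfrak p_f$ denotes the unique prime ideal of $R(D)$ maximal with respect to not containing $1/f$. *)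

theory Defs
  imports "HOL-Algebra.Algebra"
begin

(* All rings are subrings of a fixed ambient field 'k (which contains Frac D). *)

definition is_subring_set :: "'k::field set \<Rightarrow> bool" where
  "is_subring_set S \<longleftrightarrow> 0 \<in> S \<and> 1 \<in> S \<and>
     (\<forall>x\<in>S. \<forall>y\<in>S. x + y \<in> S \<and> x * y \<in> S) \<and> (\<forall>x\<in>S. - x \<in> S)"

definition gen_subring :: "'k::field set \<Rightarrow> 'k set" where
  "gen_subring Y = {x. \<forall>T. is_subring_set T \<and> (\<forall>y\<in>Y. y \<in> T) \<longrightarrow> x \<in> T}"

definition recip_compl :: "'k::field set \<Rightarrow> 'k set" where
  "recip_compl A = gen_subring {inverse a | a. a \<in> A \<and> a \<noteq> 0}"

definition egyptian :: "'k::field set \<Rightarrow> 'k \<Rightarrow> bool" where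
  "egyptian D d \<longleftrightarrow> d \<in> D \<and> d \<in> recip_compl D"

definition E_simple :: "'k::field set \<Rightarrow> bool" where
  "E_simple D \<longleftrightarrow> (\<forall>d. egyptian D d \<and> d \<noteq> 0 \<longrightarrow> inverse d \<in> D)"

definition max_subfield :: "'k::field set \<Rightarrow> 'k set" where
  "max_subfield D = {d. egyptian D d} \<union> {0}"

definition adjoin :: "'k::field set \<Rightarrow> 'k \<Rightarrow> 'k set" where
  "adjoin K f = gen_subring (K \<union> {f})"

definition ring_of :: "'k::field set \<Rightarrow> 'k ring" where
  "ring_of S = \<lparr>carrier = S, monoid.mult = (*), one = 1, ring.zero = 0, ring.add = (+)\<rparr>"

definition DVR :: "('a, 'b) ring_scheme \<Rightarrow> bool" where
  "DVR A \<longleftrightarrow> principal_domain A \<and> \<not> field A \<and> (\<exists>!M. maximalideal M A)"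

(* P is a prime ideal of R(D) maximal with respect to not containing 1/f
   (such a prime is unique; it is \<p>_f) *)
definition is_pf :: "'k::field set \<Rightarrow> 'k \<Rightarrow> 'k set \<Rightarrow> bool" where
  "is_pf D f P \<longleftrightarrow> primeideal P (ring_of (recip_compl D)) \<and> inverse f \<notin> P \<and>
     (\<forall>Q. primeideal Q (ring_of (recip_compl D)) \<and> inverse f \<notin> Q \<and> (\<forall>y\<in>P. y \<in> Q) \<longrightarrow> Q = P)"

end

theory Submission
  imports Defs
begin

(* Let t = 1/f and G = {g \<in> D. g = 0 \<or> 1/g \<notin> p_f}; the claim is G = K[f].
   Since p_f is prime and 1/(xy) = 1/(x+y) * (1/x + 1/y), G is a subring of D; it contains K and f.
   Elements of R(G) are quotients of elements of G, so R(G) \<inter> p_f = 0, and each generator 1/a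
   of R(D) lies in R(G) or in p_f, so R(D) = R(G) + p_f: thus R(G) is a copy of the DVR R(D)/p_f,
   in which t is a uniformizer and every residue class mod t contains an element of K.
   Now let g \<in> G with 1/g = t^n u mod p_f, u a unit, and u = c mod t with c \<in> K nonzero. Then
   h = g - f^n/c lies in G and (1/h) (c t^n - 1/g) = c t^n / g; the right side has order 2n and
   c t^n - 1/g has order > n, so h = 0 or 1/h has order < n. Induction on n gives g \<in> K[f]. *)

lemma ring_of_simps [simp]:
  "carrier (ring_of S) = S" "monoid.mult (ring_of S) = (*)" "one (ring_of S) = 1"
  "ring.zero (ring_of S) = 0" "ring.add (ring_of S) = (+)"
  by (simp_all add: ring_of_def)

lemma is_subring_setI:
  assumes "0 \<in> S" "1 \<in> S" "\<And>x y. x \<in> S \<Longrightarrow> y \<in> S \<Longrightarrow> x + y \<in> S"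
    "\<And>x y. x \<in> S \<Longrightarrow> y \<in> S \<Longrightarrow> x * y \<in> S" "\<And>x. x \<in> S \<Longrightarrow> - x \<in> S"
  shows "is_subring_set S"
  using assms unfolding is_subring_set_def by auto

lemma is_subring_set_closed:
  assumes "is_subring_set S"
  shows "0 \<in> S" and "1 \<in> S" and "x \<in> S \<Longrightarrow> y \<in> S \<Longrightarrow> x + y \<in> S"
    and "x \<in> S \<Longrightarrow> y \<in> S \<Longrightarrow> x * y \<in> S" and "x \<in> S \<Longrightarrow> - x \<in> S"
    and "x \<in> S \<Longrightarrow> y \<in> S \<Longrightarrow> x - y \<in> S" and "x \<in> S \<Longrightarrow> x ^ n \<in> S"
proof -
  show S: "0 \<in> S" "1 \<in> S" "x \<in> S \<Longrightarrow> y \<in> S \<Longrightarrow> x + y \<in> S"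
    "x \<in> S \<Longrightarrow> y \<in> S \<Longrightarrow> x * y \<in> S" "x \<in> S \<Longrightarrow> - x \<in> S" for x y
    using assms unfolding is_subring_set_def by auto
  show "x \<in> S \<Longrightarrow> y \<in> S \<Longrightarrow> x - y \<in> S"
    using S(3,5) by (simp only: diff_conv_add_uminus)
  show "x \<in> S \<Longrightarrow> x ^ n \<in> S"
    by (induction n) (simp_all add: S)
qed

lemma cring_ring_of:
  assumes "is_subring_set S"
  shows "cring (ring_of S)"
proof (rule cringI)
  note S_closed = is_subring_set_closed[OF assms]
  show "abelian_group (ring_of S)"
  proof (rule abelian_groupI)
    fix x assume "x \<in> carrier (ring_of S)"
    then show "\<exists>y\<in>carrier (ring_of S). y \<oplus>\<^bsub>ring_of S\<^esub> x = \<zero>\<^bsub>ring_of S\<^esub>"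
      using S_closed by (intro bexI[of _ "- x"]) auto
  qed (use S_closed in \<open>auto simp: algebra_simps\<close>)
  show "Group.comm_monoid (ring_of S)"
    by (rule comm_monoidI) (use S_closed in \<open>auto simp: algebra_simps\<close>)
qed (auto simp: algebra_simps)

lemma ring_of_minus:
  assumes S: "is_subring_set S" and "x \<in> S" "y \<in> S"
  shows "x \<ominus>\<^bsub>ring_of S\<^esub> y = x - y"
proof -
  interpret cring "ring_of S" using cring_ring_of[OF S] .
  have "\<ominus>\<^bsub>ring_of S\<^esub> y = - y"
    by (rule minus_equality) (use assms is_subring_set_closed[OF S] in auto)
  then show ?thesis by (simp add: a_minus_def)
qed

lemma ring_of_nat_pow:
  assumes S: "is_subring_set S" and "x \<in> S"
  shows "x [^]\<^bsub>ring_of S\<^esub> (n::nat) = x ^ n"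
proof -
  interpret cring "ring_of S" using cring_ring_of[OF S] .
  show ?thesis by (induction n) (simp_all add: mult.commute)
qed

lemma primeideal_ring_ofD:
  assumes S: "is_subring_set S" and P: "primeideal P (ring_of S)"
  shows "P \<subseteq> S" and "0 \<in> P" and "x \<in> P \<Longrightarrow> y \<in> P \<Longrightarrow> x + y \<in> P"
    and "x \<in> P \<Longrightarrow> r \<in> S \<Longrightarrow> r * x \<in> P" and "x \<in> P \<Longrightarrow> r \<in> S \<Longrightarrow> x * r \<in> P"
    and "x \<in> P \<Longrightarrow> - x \<in> P" and "x \<in> P \<Longrightarrow> y \<in> P \<Longrightarrow> x - y \<in> P"
    and "x \<in> S \<Longrightarrow> y \<in> S \<Longrightarrow> x * y \<in> P \<Longrightarrow> x \<in> P \<or> y \<in> P" and "1 \<notin> P"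
proof -
  interpret primeideal P "ring_of S" by fact
  note S_closed = is_subring_set_closed[OF S]
  show "P \<subseteq> S" using a_subset by simp
  show "0 \<in> P" using additive_subgroup.zero_closed[OF additive_subgroup_axioms] by simp
  show add: "x + y \<in> P" if "x \<in> P" "y \<in> P" for x y
    using additive_subgroup.a_closed[OF additive_subgroup_axioms that] by simp
  show mult: "r * x \<in> P" "x * r \<in> P" if "x \<in> P" "r \<in> S" for x r
    using I_l_closed[of x r] I_r_closed[of x r] that by simp_all
  show neg: "- x \<in> P" if "x \<in> P" for x
    using mult(1)[OF that S_closed(5)[OF S_closed(2)]] by simp
  show "x - y \<in> P" if "x \<in> P" "y \<in> P" for x y
    using add[OF that(1) neg[OF that(2)]] by simp
  show "x \<in> P \<or> y \<in> P" if "x \<in> S" "y \<in> S" "x * y \<in> P" for x y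
    using I_prime[of x y] that by simp
  show "1 \<notin> P"
    using one_imp_carrier I_notcarr by auto
qed

lemma subring_gen_subring: "is_subring_set (gen_subring Y)"
proof (rule is_subring_setI)
  have mem: "x \<in> gen_subring Y \<longleftrightarrow> (\<forall>T. is_subring_set T \<and> (\<forall>y\<in>Y. y \<in> T) \<longrightarrow> x \<in> T)" for x
    unfolding gen_subring_def by simp
  show "0 \<in> gen_subring Y" "1 \<in> gen_subring Y"
    unfolding mem is_subring_set_def by simp_all
  show "x + y \<in> gen_subring Y" "x * y \<in> gen_subring Y"
    if "x \<in> gen_subring Y" "y \<in> gen_subring Y" for x y
    using that unfolding mem is_subring_set_def by simp_all
  show "- x \<in> gen_subring Y" if "x \<in> gen_subring Y" for x
    using that unfolding mem is_subring_set_def by simp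
qed

lemma gen_subring_generator: "y \<in> Y \<Longrightarrow> y \<in> gen_subring Y"
  unfolding gen_subring_def by simp

lemma gen_subring_minimal: "is_subring_set T \<Longrightarrow> Y \<subseteq> T \<Longrightarrow> gen_subring Y \<subseteq> T"
  unfolding gen_subring_def by blast

lemma subring_recip_compl: "is_subring_set (recip_compl A)"
  unfolding recip_compl_def by (rule subring_gen_subring)

lemma inverse_in_recip_compl: "a \<in> A \<Longrightarrow> inverse a \<in> recip_compl A"
  using is_subring_set_closed(1)[OF subring_recip_compl]
  by (cases "a = 0") (auto simp: recip_compl_def intro: gen_subring_generator)

lemma recip_compl_minimal:
  assumes "is_subring_set T" and "\<And>a. a \<in> A \<Longrightarrow> a \<noteq> 0 \<Longrightarrow> inverse a \<in> T"
  shows "recip_compl A \<subseteq> T"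
  unfolding recip_compl_def using assms by (intro gen_subring_minimal) auto

lemma recip_compl_mono: "A \<subseteq> B \<Longrightarrow> recip_compl A \<subseteq> recip_compl B"
  by (rule recip_compl_minimal[OF subring_recip_compl]) (auto intro: inverse_in_recip_compl)

lemma recip_compl_subset_fractions:
  assumes A: "is_subring_set A"
  shows "recip_compl A \<subseteq> {a / b | a b. a \<in> A \<and> b \<in> A \<and> b \<noteq> 0}" (is "_ \<subseteq> ?F")
proof (rule recip_compl_minimal)
  note A_closed = is_subring_set_closed[OF A]
  have fracI: "a / b \<in> ?F" if "a \<in> A" "b \<in> A" "b \<noteq> 0" for a b
    using that by blast
  show "inverse a \<in> ?F" if "a \<in> A" "a \<noteq> 0" for a
    using fracI[OF A_closed(2) that] by (simp add: divide_inverse)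
  show "is_subring_set ?F"
  proof (rule is_subring_setI)
    show "0 \<in> ?F" "1 \<in> ?F"
      using fracI[OF A_closed(1,2)] fracI[OF A_closed(2,2)] by simp_all
    show "- x \<in> ?F" if "x \<in> ?F" for x
    proof -
      from that obtain a b where "a \<in> A" "b \<in> A" "b \<noteq> 0" "x = a / b" by blast
      then show ?thesis using fracI[of "- a" b] A_closed(5) by simp
    qed
    show "x + y \<in> ?F" "x * y \<in> ?F" if "x \<in> ?F" "y \<in> ?F" for x y
    proof -
      from that obtain a b a' b' where "a \<in> A" "b \<in> A" "b \<noteq> 0" "x = a / b"
        and "a' \<in> A" "b' \<in> A" "b' \<noteq> 0" "y = a' / b'" by blast
      then show "x + y \<in> ?F" "x * y \<in> ?F"
        using fracI[of "a * b' + a' * b" "b * b'"] fracI[of "a * a'" "b * b'"] A_closed(3,4)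
        by (simp_all add: add_frac_eq)
    qed
  qed
qed

lemma subring_adjoin: "is_subring_set (adjoin K f)"
  unfolding adjoin_def by (rule subring_gen_subring)

lemma subset_adjoin: "K \<subseteq> adjoin K f"
  unfolding adjoin_def by (auto intro: gen_subring_generator)

lemma in_adjoin: "f \<in> adjoin K f"
  unfolding adjoin_def by (auto intro: gen_subring_generator)

lemma adjoin_minimal: "is_subring_set T \<Longrightarrow> K \<subseteq> T \<Longrightarrow> f \<in> T \<Longrightarrow> adjoin K f \<subseteq> T"
  unfolding adjoin_def by (rule gen_subring_minimal) auto

lemma max_subfield_eq:
  assumes "is_subring_set D"
  shows "max_subfield D = D \<inter> recip_compl D"
  using is_subring_set_closed(1)[OF assms] is_subring_set_closed(1)[OF subring_recip_compl]
  unfolding max_subfield_def egyptian_def by auto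

lemma subring_max_subfield:
  assumes "is_subring_set D"
  shows "is_subring_set (max_subfield D)"
  unfolding max_subfield_eq[OF assms]
  using is_subring_set_closed[OF assms] is_subring_set_closed[OF subring_recip_compl]
  by (intro is_subring_setI) auto

lemma E_simple_inverse_in_max_subfield:
  assumes "is_subring_set D" and "E_simple D" and "c \<in> max_subfield D"
  shows "inverse c \<in> max_subfield D"
  using assms inverse_in_recip_compl[of c D]
  unfolding max_subfield_eq[OF assms(1)] E_simple_def egyptian_def
  by (cases "c = 0") auto

lemma (in principal_domain) local_irreducible_associated:
  assumes unique_max: "\<exists>!M. maximalideal M R"
    and t: "t \<in> carrier R" "ring_irreducible t" and x: "x \<in> carrier R" "ring_irreducible x"
  shows "\<exists>u\<in>Units R. x = t \<otimes> u"
proof -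
  have "maximalideal (PIdl x) R" "maximalideal (PIdl t) R"
    using irreducible_imp_maximalideal t x by blast+
  then have "PIdl x = PIdl t"
    using unique_max by blast
  then have "x \<sim> t"
    using associated_iff_same_ideal t(1) x(1) by simp
  then obtain u where "u \<in> Units R" "x = u \<otimes> t"
    using ring_associated_iff t(1) x(1) by blast
  then show ?thesis
    using m_comm t(1) by (metis Units_closed)
qed

lemma (in principal_domain) local_eq_pow_mult_unit:
  assumes unique_max: "\<exists>!M. maximalideal M R"
    and t: "t \<in> carrier R" "ring_irreducible t" and a: "a \<in> carrier R" "a \<noteq> \<zero>"
  shows "\<exists>n::nat. \<exists>u\<in>Units R. a = t [^] n \<otimes> u"
proof (cases "a \<in> Units R")
  case True
  then show ?thesis by (intro exI[of _ 0] bexI[of _ a]) auto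
next
  case False
  have factor_prod: "\<exists>n::nat. \<exists>u\<in>Units R. foldr (\<otimes>) xs \<one> = t [^] n \<otimes> u"
    if "set xs \<subseteq> carrier R - {\<zero>}" "\<forall>x\<in>set xs. irreducible (mult_of R) x" for xs
    using that
  proof (induction xs)
    case Nil
    show ?case by (intro exI[of _ 0] bexI[of _ \<one>]) auto
  next
    case (Cons x xs)
    then obtain n :: nat and u where u: "u \<in> Units R" "foldr (\<otimes>) xs \<one> = t [^] n \<otimes> u"
      by auto
    have x: "x \<in> carrier R" "ring_irreducible x"
      using Cons.prems ring_irreducibleI' by auto
    obtain v where v: "v \<in> Units R" "x = t \<otimes> v"
      using local_irreducible_associated[OF unique_max t x] by blast
    have "foldr (\<otimes>) (x # xs) \<one> = (t \<otimes> v) \<otimes> (t [^] n \<otimes> u)"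
      using u v by simp
    also have "\<dots> = t [^] Suc n \<otimes> (v \<otimes> u)"
      using t(1) u(1) v(1) by (simp add: Units_closed m_ac)
    finally show ?case
      using u(1) v(1) by blast
  qed
  have "a \<in> carrier (mult_of R)" "a \<notin> Units (mult_of R)"
    using a False by auto
  then obtain fs where fs: "set fs \<subseteq> carrier (mult_of R)" "factors (mult_of R) fs a"
    using mult_of.factors_exist by blast
  then have "foldr (\<otimes>) fs \<one> = a" "\<forall>x\<in>set fs. irreducible (mult_of R) x"
    unfolding factors_def by simp_all
  then show ?thesis
    using factor_prod[of fs] fs(1) by simp
qed

lemma carrier_Quot: "carrier (R Quot I) = (+>\<^bsub>R\<^esub>) I ` carrier R"
  by (auto simp: FactRing_def A_RCOSETS_def RCOSETS_def a_r_coset_def)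

lemma rcos_eq_iff_diff_in:
  assumes S: "is_subring_set S" and P: "ideal P (ring_of S)" and "x \<in> S" "y \<in> S"
  shows "P +>\<^bsub>ring_of S\<^esub> x = P +>\<^bsub>ring_of S\<^esub> y \<longleftrightarrow> x - y \<in> P"
  using ring.quotient_eq_iff_same_a_r_cos[OF cring.axioms(1)[OF cring_ring_of[OF S]] P] assms
  by (simp add: ring_of_minus)

definition unit_mod :: "'k::field set \<Rightarrow> 'k set \<Rightarrow> 'k \<Rightarrow> bool" where
  "unit_mod S P u \<longleftrightarrow> u \<in> S \<and> (\<exists>v\<in>S. u * v - 1 \<in> P)"

lemma unit_mod_iff_rcos_Units:
  assumes S: "is_subring_set S" and P: "ideal P (ring_of S)" and u: "u \<in> S"
  shows "unit_mod S P u \<longleftrightarrow> P +>\<^bsub>ring_of S\<^esub> u \<in> Units (ring_of S Quot P)"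
proof -
  interpret h: ring_hom_cring "ring_of S" "ring_of S Quot P" "(+>\<^bsub>ring_of S\<^esub>) P"
    using ideal.rcos_ring_hom_cring[OF P cring_ring_of[OF S]] .
  have inverse_iff: "(P +>\<^bsub>ring_of S\<^esub> u) \<otimes>\<^bsub>ring_of S Quot P\<^esub> (P +>\<^bsub>ring_of S\<^esub> v)
      = \<one>\<^bsub>ring_of S Quot P\<^esub> \<longleftrightarrow> u * v - 1 \<in> P" if "v \<in> S" for v
    using h.hom_mult[of u v] h.hom_one rcos_eq_iff_diff_in[OF S P, of "u * v" 1]
      is_subring_set_closed[OF S] u that by simp
  show ?thesis
    unfolding unit_mod_def Units_def carrier_Quot
    using u inverse_iff h.S.m_comm by auto
qed

lemma DVR_Quot_cong_pow_mult_unit: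
  assumes S: "is_subring_set S" and P: "primeideal P (ring_of S)"
    and DVR: "DVR (ring_of S Quot P)"
    and t: "t \<in> S" and irr: "ring_irreducible\<^bsub>ring_of S Quot P\<^esub> (P +>\<^bsub>ring_of S\<^esub> t)"
    and x: "x \<in> S" "x \<notin> P"
  shows "\<exists>n u. unit_mod S P u \<and> x - t ^ n * u \<in> P"
proof -
  interpret primeideal P "ring_of S" by fact
  interpret h: ring_hom_cring "ring_of S" "ring_of S Quot P" "(+>\<^bsub>ring_of S\<^esub>) P"
    by (rule rcos_ring_hom_cring)
  interpret W: principal_domain "ring_of S Quot P"
    using DVR unfolding DVR_def by blast
  note S_closed = is_subring_set_closed[OF S]
  have unique_max: "\<exists>!M. maximalideal M (ring_of S Quot P)"
    using DVR unfolding DVR_def by blast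
  have in_carrier: "P +>\<^bsub>ring_of S\<^esub> t \<in> carrier (ring_of S Quot P)"
    "P +>\<^bsub>ring_of S\<^esub> x \<in> carrier (ring_of S Quot P)"
    using carrier_Quot t x(1) by auto
  have "P +>\<^bsub>ring_of S\<^esub> x \<noteq> \<zero>\<^bsub>ring_of S Quot P\<^esub>"
    using h.hom_zero rcos_eq_iff_diff_in[OF S is_ideal x(1) S_closed(1)] x by auto
  then obtain n :: nat and U where U: "U \<in> Units (ring_of S Quot P)"
    "P +>\<^bsub>ring_of S\<^esub> x = (P +>\<^bsub>ring_of S\<^esub> t) [^]\<^bsub>ring_of S Quot P\<^esub> n \<otimes>\<^bsub>ring_of S Quot P\<^esub> U"
    using W.local_eq_pow_mult_unit[OF unique_max in_carrier(1) irr in_carrier(2)] by blast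
  then obtain u where u: "u \<in> S" "U = P +>\<^bsub>ring_of S\<^esub> u"
    using U(1) unfolding Units_def carrier_Quot by auto
  have "P +>\<^bsub>ring_of S\<^esub> x = P +>\<^bsub>ring_of S\<^esub> (t ^ n * u)"
    using U(2) h.hom_mult[of "t ^ n" u] h.ring.hom_nat_pow[of t n] ring_of_nat_pow[OF S t]
      S_closed t u by simp
  then have "x - t ^ n * u \<in> P"
    using rcos_eq_iff_diff_in[OF S is_ideal] x S_closed t u by simp
  moreover have "unit_mod S P u"
    using unit_mod_iff_rcos_Units[OF S is_ideal u(1)] U(1) u(2) by simp
  ultimately show ?thesis by blast
qed

lemma irreducible_rcos_not_unit_mod:
  assumes S: "is_subring_set S" and P: "primeideal P (ring_of S)"
    and t: "t \<in> S" and irr: "ring_irreducible\<^bsub>ring_of S Quot P\<^esub> (P +>\<^bsub>ring_of S\<^esub> t)"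
  shows "\<not> unit_mod S P t"
proof -
  interpret primeideal P "ring_of S" by fact
  interpret W: domain "ring_of S Quot P" by (rule quotient_is_domain)
  show ?thesis
    using W.ring_irreducibleE(4)[OF _ irr] unit_mod_iff_rcos_Units[OF S is_ideal t] t carrier_Quot
    by auto
qed

lemma inverse_diff_frac_mult:
  fixes g c F :: "'a::field"
  assumes "g \<noteq> 0" "c \<noteq> 0" "F \<noteq> 0" "g - F / c \<noteq> 0"
  shows "inverse (g - F / c) * (c / F - inverse g) = c / (g * F)"
  using assms by (simp add: field_simps)

locale E_simple_DVR_setting =
  fixes D :: "'k::field set" and f :: 'k and P :: "'k set"
  assumes subring_D: "is_subring_set D"
    and E_simple_D: "E_simple D"
    and f_in_D: "f \<in> D" and f_nonzero: "f \<noteq> 0"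
    and prime_P: "primeideal P (ring_of (recip_compl D))"
    and inverse_f_notin_P: "inverse f \<notin> P"
    and DVR_Quot_P: "DVR (ring_of (recip_compl D) Quot P)"
    and irreducible_inverse_f:
      "ring_irreducible\<^bsub>ring_of (recip_compl D) Quot P\<^esub> (P +>\<^bsub>ring_of (recip_compl D)\<^esub> inverse f)"
begin

abbreviation "R \<equiv> recip_compl D"
abbreviation "K \<equiv> max_subfield D"
abbreviation "t \<equiv> inverse f"

lemmas D_closed [simp] = is_subring_set_closed[OF subring_D]
lemmas R_closed [simp] = is_subring_set_closed[OF subring_recip_compl[of D]]
lemmas K_closed [simp] = is_subring_set_closed[OF subring_max_subfield[OF subring_D]]

lemma K_eq: "K = D \<inter> R"
  by (rule max_subfield_eq[OF subring_D])

lemma inverse_in_K: "c \<in> K \<Longrightarrow> inverse c \<in> K"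
  by (rule E_simple_inverse_in_max_subfield[OF subring_D E_simple_D])

lemma inverse_in_R: "a \<in> D \<Longrightarrow> inverse a \<in> R"
  by (rule inverse_in_recip_compl)

lemma t_in_R: "t \<in> R"
  by (rule inverse_in_R[OF f_in_D])

lemmas P_subset_R = primeideal_ring_ofD(1)[OF subring_recip_compl prime_P]
lemmas zero_in_P [simp] = primeideal_ring_ofD(2)[OF subring_recip_compl prime_P]
lemmas P_add = primeideal_ring_ofD(3)[OF subring_recip_compl prime_P]
lemmas P_mult_left = primeideal_ring_ofD(4)[OF subring_recip_compl prime_P]
lemmas P_mult_right = primeideal_ring_ofD(5)[OF subring_recip_compl prime_P]
lemmas P_uminus = primeideal_ring_ofD(6)[OF subring_recip_compl prime_P]
lemmas P_diff = primeideal_ring_ofD(7)[OF subring_recip_compl prime_P]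
lemmas P_prime = primeideal_ring_ofD(8)[OF subring_recip_compl prime_P]
lemmas one_notin_P [simp] = primeideal_ring_ofD(9)[OF subring_recip_compl prime_P]

abbreviation "unit_mod_P \<equiv> unit_mod R P"

lemma cong_pow_mult_unit: "x \<in> R \<Longrightarrow> x \<notin> P \<Longrightarrow> \<exists>n u. unit_mod_P u \<and> x - t ^ n * u \<in> P"
  by (rule DVR_Quot_cong_pow_mult_unit[OF subring_recip_compl prime_P DVR_Quot_P t_in_R
        irreducible_inverse_f])

lemma not_unit_mod_t: "\<not> unit_mod_P t"
  by (rule irreducible_rcos_not_unit_mod[OF subring_recip_compl prime_P t_in_R irreducible_inverse_f])

lemma unit_mod_in_R: "unit_mod_P u \<Longrightarrow> u \<in> R"
  unfolding unit_mod_def by blast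

lemma unit_mod_cong:
  assumes u: "unit_mod_P u" and x: "x \<in> R" "x - u \<in> P"
  shows "unit_mod_P x"
proof -
  obtain v where v: "v \<in> R" "u * v - 1 \<in> P"
    using u unfolding unit_mod_def by blast
  have "x * v - 1 = (u * v - 1) + (x - u) * v"
    by (simp add: algebra_simps)
  also have "\<dots> \<in> P"
    using P_add[OF v(2) P_mult_right[OF x(2) v(1)]] .
  finally show ?thesis
    unfolding unit_mod_def using x(1) v(1) by blast
qed

lemma unit_mod_mult:
  assumes "unit_mod_P u" and "unit_mod_P u'"
  shows "unit_mod_P (u * u')"
proof -
  obtain v v' where v: "v \<in> R" "u * v - 1 \<in> P" and v': "v' \<in> R" "u' * v' - 1 \<in> P"
    using assms unfolding unit_mod_def by blast
  have "u * u' * (v * v') - 1 = (u * v - 1) * (u' * v') + (u' * v' - 1)"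
    by (simp add: algebra_simps)
  also have "\<dots> \<in> P"
    using P_add[OF P_mult_right[OF v(2)] v'(2)] assms v v' unfolding unit_mod_def by simp
  finally show ?thesis
    using assms v v' unfolding unit_mod_def by auto
qed

lemma unit_mod_K: "c \<in> K \<Longrightarrow> c \<noteq> 0 \<Longrightarrow> unit_mod_P c"
  using inverse_in_K K_eq unfolding unit_mod_def by force

lemma unit_mod_factor:
  assumes "unit_mod_P (x * y)" and "x \<in> R" "y \<in> R"
  shows "unit_mod_P x"
proof -
  obtain v where "v \<in> R" "x * y * v - 1 \<in> P"
    using assms(1) unfolding unit_mod_def by blast
  then show ?thesis
    unfolding unit_mod_def using assms(2,3) by (intro conjI bexI[of _ "y * v"]) (simp_all add: mult.assoc)
qed

lemma t_pow_notin_P: "t ^ n \<notin> P"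
proof (induction n)
  case (Suc n)
  then show ?case
    using P_prime[of t "t ^ n"] inverse_f_notin_P t_in_R by auto
qed simp

lemma pow_mult_unit_not_cong:
  assumes "a < b" and U: "unit_mod_P U" and z: "z \<in> R"
  shows "t ^ a * U - t ^ b * z \<notin> P"
proof
  obtain k where b: "b = Suc (a + k)"
    using less_imp_Suc_add[OF \<open>a < b\<close>] by blast
  assume "t ^ a * U - t ^ b * z \<in> P"
  moreover have "t ^ a * U - t ^ b * z = t ^ a * (U - t * (t ^ k * z))"
    unfolding b by (simp add: algebra_simps power_add)
  ultimately have "U - t * (t ^ k * z) \<in> P"
    using P_prime t_pow_notin_P unit_mod_in_R[OF U] t_in_R z by (metis R_closed(4,6,7))
  then have "unit_mod_P (t * (t ^ k * z))"
    using unit_mod_cong[OF U] P_uminus t_in_R z by (metis R_closed(4,7) minus_diff_eq)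
  then show False
    using unit_mod_factor not_unit_mod_t t_in_R z by simp
qed

definition G :: "'k set" where
  "G = {g \<in> D. g = 0 \<or> inverse g \<notin> P}"

lemma G_subset_D: "G \<subseteq> D"
  by (auto simp: G_def)

lemma subring_G: "is_subring_set G"
proof (rule is_subring_setI)
  show "0 \<in> G" "1 \<in> G"
    by (auto simp: G_def)
  show "- x \<in> G" if "x \<in> G" for x
    using that P_uminus[of "- inverse x"] by (auto simp: G_def)
  show "x * y \<in> G" if "x \<in> G" "y \<in> G" for x y
    using that P_prime[of "inverse x" "inverse y"] inverse_in_R
    by (auto simp: G_def inverse_mult_distrib)
  show "x + y \<in> G" if x: "x \<in> G" and y: "y \<in> G" for x y
  proof (cases "x = 0 \<or> y = 0 \<or> x + y = 0")
    case True
    then show ?thesis using x y by (auto simp: G_def)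
  next
    case False
    with x y have xy: "x \<in> D" "y \<in> D" "inverse x \<notin> P" "inverse y \<notin> P"
      by (auto simp: G_def)
    have "inverse x * inverse y = inverse (x + y) * (inverse x + inverse y)"
      using False by (simp add: field_simps)
    then have "inverse (x + y) \<notin> P"
      using P_prime[of "inverse x" "inverse y"] P_mult_right[of "inverse (x + y)" "inverse x + inverse y"]
        inverse_in_R xy by auto
    then show ?thesis
      using xy by (simp add: G_def)
  qed
qed

lemmas G_closed [simp] = is_subring_set_closed[OF subring_G]
lemmas recip_compl_G_closed [simp] = is_subring_set_closed[OF subring_recip_compl[of G]]
lemmas adjoin_closed [simp] = is_subring_set_closed[OF subring_adjoin[of K f]]

lemma K_subset_G: "K \<subseteq> G"
proof
  fix c assume c: "c \<in> K"
  have "inverse c \<notin> P" if "c \<noteq> 0"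
  proof
    assume "inverse c \<in> P"
    then have "c * inverse c \<in> P"
      using P_mult_left c K_eq by blast
    then show False
      using that by simp
  qed
  then show "c \<in> G"
    using c K_eq by (auto simp: G_def)
qed

lemma f_in_G: "f \<in> G"
  using f_in_D inverse_f_notin_P by (simp add: G_def)

lemma adjoin_subset_G: "adjoin K f \<subseteq> G"
  by (rule adjoin_minimal[OF subring_G K_subset_G f_in_G])

lemma recip_compl_G_subset_R: "recip_compl G \<subseteq> R"
  by (rule recip_compl_mono[OF G_subset_D])

lemma recip_compl_G_inter_P: "recip_compl G \<inter> P = {0}"
proof -
  have "x = 0" if x: "x \<in> recip_compl G" "x \<in> P" for x
  proof (rule ccontr)
    assume "x \<noteq> 0"
    obtain a b where ab: "a \<in> G" "b \<in> G" "b \<noteq> 0" "x = a / b"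
      using recip_compl_subset_fractions[OF subring_G] x(1) by blast
    with \<open>x \<noteq> 0\<close> have "inverse b = x * inverse a"
      by (simp add: field_simps)
    also have "\<dots> \<in> P"
      using P_mult_right[OF x(2) inverse_in_R] ab(1) G_subset_D by blast
    finally show False
      using ab by (simp add: G_def)
  qed
  then show ?thesis by auto
qed

lemma cong_recip_compl_G:
  assumes "x \<in> R"
  shows "\<exists>r\<in>recip_compl G. x - r \<in> P"
proof -
  let ?T = "{x \<in> R. \<exists>r\<in>recip_compl G. x - r \<in> P}"
  have "R \<subseteq> ?T"
  proof (rule recip_compl_minimal)
    show "inverse a \<in> ?T" if "a \<in> D" "a \<noteq> 0" for a
    proof (cases "a \<in> G")
      case True
      then show ?thesis
        using inverse_in_R[OF \<open>a \<in> D\<close>] inverse_in_recip_compl[of a G] by force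
    next
      case False
      then have "inverse a \<in> P"
        using that by (simp add: G_def)
      then show ?thesis
        using inverse_in_R[OF \<open>a \<in> D\<close>] by (intro CollectI conjI bexI[of _ 0]) simp_all
    qed
    show "is_subring_set ?T"
    proof (rule is_subring_setI)
      show "0 \<in> ?T"
        by (auto intro!: bexI[of _ 0])
      show "1 \<in> ?T"
        by (auto intro!: bexI[of _ 1])
      show "- x \<in> ?T" if "x \<in> ?T" for x
      proof -
        from that obtain r where "x \<in> R" "r \<in> recip_compl G" "x - r \<in> P" by blast
        then show ?thesis
          using P_uminus[of "x - r"] by (intro CollectI conjI bexI[of _ "- r"]) simp_all
      qed
      show "x + y \<in> ?T" "x * y \<in> ?T" if "x \<in> ?T" "y \<in> ?T" for x y
      proof -
        from that obtain r s where x: "x \<in> R" "r \<in> recip_compl G" "x - r \<in> P"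
          and y: "y \<in> R" "s \<in> recip_compl G" "y - s \<in> P" by blast
        have "x + y - (r + s) \<in> P"
          using P_add[OF x(3) y(3)] by (simp add: algebra_simps)
        moreover have "x * y - r * s \<in> P"
          using P_add[OF P_mult_right[OF x(3) y(1)] P_mult_left[OF y(3) subsetD[OF recip_compl_G_subset_R x(2)]]]
          by (simp add: algebra_simps)
        ultimately show "x + y \<in> ?T" "x * y \<in> ?T"
          using x y by auto
      qed
    qed
  qed
  then show ?thesis
    using assms by blast
qed

lemma R_eq_recip_compl_G_plus_P: "R = {a + b | a b. a \<in> recip_compl G \<and> b \<in> P}"
proof
  show "R \<subseteq> {a + b | a b. a \<in> recip_compl G \<and> b \<in> P}"
    using cong_recip_compl_G by force
  show "{a + b | a b. a \<in> recip_compl G \<and> b \<in> P} \<subseteq> R"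
    using recip_compl_G_subset_R P_subset_R by (blast intro: R_closed(3))
qed

lemma unit_mod_inverse_imp_in_K:
  assumes g: "g \<in> G" "g \<noteq> 0" and unit: "unit_mod_P (inverse g)"
  shows "g \<in> K"
proof -
  have "g \<in> D"
    using g(1) G_subset_D by blast
  obtain y where y: "y \<in> R" "inverse g * y - 1 \<in> P"
    using unit unfolding unit_mod_def by blast
  obtain r where r: "r \<in> recip_compl G" "y - r \<in> P"
    using cong_recip_compl_G[OF y(1)] by blast
  have "inverse g * r - 1 = (inverse g * y - 1) - inverse g * (y - r)"
    by (simp add: algebra_simps)
  also have "\<dots> \<in> P"
    using P_diff[OF y(2) P_mult_left[OF r(2) inverse_in_R[OF \<open>g \<in> D\<close>]]] .
  finally have "inverse g * r - 1 \<in> recip_compl G \<inter> P"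
    using r(1) inverse_in_recip_compl[OF g(1)] by simp
  then have "r = g"
    using recip_compl_G_inter_P g(2) by (simp add: field_simps)
  then show ?thesis
    using r(1) recip_compl_G_subset_R \<open>g \<in> D\<close> K_eq by blast
qed

lemma subring_residue_K: "is_subring_set {x \<in> R. \<exists>c\<in>K. \<exists>w\<in>R. x - c - t * w \<in> P}"
  (is "is_subring_set ?T")
proof (rule is_subring_setI)
  have T_I: "x \<in> ?T" if "x \<in> R" "c \<in> K" "w \<in> R" "x - c - t * w \<in> P" for x c w
    using that by blast
  show "0 \<in> ?T" "1 \<in> ?T"
    using T_I[of 0 0 0] T_I[of 1 1 0] by simp_all
  show "- x \<in> ?T" if "x \<in> ?T" for x
  proof -
    from that obtain c w where x: "x \<in> R" "c \<in> K" "w \<in> R" "x - c - t * w \<in> P" by blast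
    have "- x - (- c) - t * (- w) \<in> P"
      using P_uminus[OF x(4)] by (simp add: algebra_simps)
    with x show ?thesis
      by (intro T_I[of "- x" "- c" "- w"]) simp_all
  qed
  show "x + y \<in> ?T" "x * y \<in> ?T" if "x \<in> ?T" "y \<in> ?T" for x y
  proof -
    from that obtain c w c' w'
      where x: "x \<in> R" "c \<in> K" "w \<in> R" "x - c - t * w \<in> P"
        and y: "y \<in> R" "c' \<in> K" "w' \<in> R" "y - c' - t * w' \<in> P" by blast
    have "c \<in> R" "c' \<in> R"
      using x(2) y(2) K_eq by blast+
    have "x + y - (c + c') - t * (w + w') \<in> P"
      using P_add[OF x(4) y(4)] by (simp add: algebra_simps)
    then show "x + y \<in> ?T"
      using T_I[of "x + y" "c + c'" "w + w'"] x y by simp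
    have "x * y - c * c' - t * (c * w' + w * c' + t * w * w')
        = (x - c - t * w) * y + (c + t * w) * (y - c' - t * w')"
      by (simp add: algebra_simps)
    also have "\<dots> \<in> P"
      using P_add[OF P_mult_right[OF x(4) y(1)] P_mult_left[OF y(4)]] \<open>c \<in> R\<close> x(3) t_in_R by simp
    finally show "x * y \<in> ?T"
      using T_I[of "x * y" "c * c'" "c * w' + w * c' + t * w * w'"] x y \<open>c \<in> R\<close> \<open>c' \<in> R\<close> t_in_R
      by simp
  qed
qed

lemma residue_in_K:
  assumes "x \<in> R"
  shows "\<exists>c\<in>K. \<exists>w\<in>R. x - c - t * w \<in> P"
proof -
  let ?T = "{x \<in> R. \<exists>c\<in>K. \<exists>w\<in>R. x - c - t * w \<in> P}"
  have T_I: "x \<in> ?T" if "x \<in> R" "c \<in> K" "w \<in> R" "x - c - t * w \<in> P" for x c w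
    using that by blast
  have "R \<subseteq> ?T"
  proof (rule recip_compl_minimal[OF subring_residue_K])
    fix a assume a: "a \<in> D" "a \<noteq> 0"
    show "inverse a \<in> ?T"
    proof (cases "inverse a \<in> P")
      case True
      then show ?thesis
        using T_I[of "inverse a" 0 0] inverse_in_R[OF a(1)] by simp
    next
      case False
      then obtain n u where u: "unit_mod_P u" "inverse a - t ^ n * u \<in> P"
        using cong_pow_mult_unit inverse_in_R[OF a(1)] by blast
      show ?thesis
      proof (cases n)
        case 0
        then have "unit_mod_P (inverse a)"
          using unit_mod_cong[OF u(1) inverse_in_R[OF a(1)]] u(2) by simp
        then have "a \<in> K"
          using unit_mod_inverse_imp_in_K a False by (simp add: G_def)
        then show ?thesis
          using T_I[of "inverse a" "inverse a" 0] inverse_in_R[OF a(1)] inverse_in_K by simp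
      next
        case (Suc k)
        then show ?thesis
          using T_I[of "inverse a" 0 "t ^ k * u"] inverse_in_R[OF a(1)] u(2) unit_mod_in_R[OF u(1)] t_in_R
          by (simp add: mult.assoc)
      qed
    qed
  qed
  then show ?thesis
    using assms by blast
qed

lemma unit_residue_nonzero:
  assumes "unit_mod_P u" and "w \<in> R" and "u - c - t * w \<in> P"
  shows "c \<noteq> 0"
  using pow_mult_unit_not_cong[of 0 1 u w] assms by auto

(* With h = g - f^n/c: (1/h) (c t^n - 1/g) = c t^n / g, where c t^n - 1/g = -t^(n+1) w mod P.
   If 1/h = t^m u' with m \<ge> n, comparing both sides gives t^(2n) (c u) = t^(m+n+1) (-u' w) mod P,
   impossible since c u is a unit. *)
lemma descent_exponent_less:
  assumes g: "g \<in> G" "g \<noteq> 0" and u: "unit_mod_P u" "inverse g - t ^ n * u \<in> P"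
    and c: "c \<in> K" "c \<noteq> 0" and w: "w \<in> R" "u - c - t * w \<in> P"
    and h: "g - f ^ n / c \<noteq> 0"
    and u': "unit_mod_P u'" "inverse (g - f ^ n / c) - t ^ m * u' \<in> P"
  shows "m < n"
proof (rule ccontr)
  assume "\<not> m < n"
  define B where "B = c * t ^ n - inverse g"
  have R: "inverse g \<in> R" "c \<in> R" "u \<in> R" "u' \<in> R"
    using g G_subset_D c K_eq u(1) u'(1) inverse_in_R unit_mod_in_R by blast+
  have key: "inverse (g - f ^ n / c) * B = c * inverse g * t ^ n"
    using inverse_diff_frac_mult[of g c "f ^ n"] g(2) c(2) f_nonzero h
    by (simp add: B_def power_inverse divide_inverse mult.commute)
  have "B + t ^ (n + 1) * w = - (inverse g - t ^ n * u) - t ^ n * (u - c - t * w)"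
    by (simp add: B_def algebra_simps)
  also have "\<dots> \<in> P"
    using P_diff[OF P_uminus[OF u(2)] P_mult_left[OF w(2)]] t_in_R by simp
  finally have B: "B + t ^ (n + 1) * w \<in> P" .
  have "t ^ (n + n) * (c * u) - t ^ (m + n + 1) * (- (u' * w))
      = t ^ m * u' * (B + t ^ (n + 1) * w) + (inverse (g - f ^ n / c) - t ^ m * u') * B
        - c * t ^ n * (inverse g - t ^ n * u)"
    using key by (simp add: algebra_simps power_add)
  also have "\<dots> \<in> P"
    using P_diff[OF P_add[OF P_mult_left[OF B] P_mult_right[OF u'(2)]] P_mult_left[OF u(2)]]
      R t_in_R w(1) by (simp add: B_def)
  finally show False
    using pow_mult_unit_not_cong[of "n + n" "m + n + 1" "c * u" "- (u' * w)"] \<open>\<not> m < n\<close>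
      unit_mod_mult[OF unit_mod_K[OF c] u(1)] R w(1) by simp
qed

lemma in_adjoin_if_cong_pow_mult_unit:
  assumes "g \<in> G" "g \<noteq> 0" "unit_mod_P u" "inverse g - t ^ n * u \<in> P"
  shows "g \<in> adjoin K f"
  using assms
proof (induction n arbitrary: g u rule: less_induct)
  case (less n)
  obtain c w where c: "c \<in> K" and w: "w \<in> R" "u - c - t * w \<in> P"
    using residue_in_K[OF unit_mod_in_R[OF less.prems(3)]] by blast
  have "c \<noteq> 0"
    using unit_residue_nonzero[OF less.prems(3) w] .
  have "inverse c \<in> adjoin K f"
    using subset_adjoin inverse_in_K[OF c] by blast
  then have fc: "f ^ n / c \<in> adjoin K f"
    using in_adjoin[of f K] by (simp add: divide_inverse)
  show ?case
  proof (cases "g - f ^ n / c = 0")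
    case True
    then show ?thesis using fc by simp
  next
    case False
    have h: "g - f ^ n / c \<in> G"
      using less.prems(1) fc adjoin_subset_G by auto
    then have "inverse (g - f ^ n / c) \<in> R" "inverse (g - f ^ n / c) \<notin> P"
      using inverse_in_R G_subset_D False by (auto simp: G_def)
    then obtain m u' where u': "unit_mod_P u'" "inverse (g - f ^ n / c) - t ^ m * u' \<in> P"
      using cong_pow_mult_unit by blast
    have "m < n"
      using descent_exponent_less[OF less.prems c \<open>c \<noteq> 0\<close> w False u'] .
    then have "g - f ^ n / c \<in> adjoin K f"
      using less.IH h False u' by blast
    then show ?thesis
      using fc adjoin_closed(3) by fastforce
  qed
qed

lemma G_eq_adjoin: "G = adjoin K f"
proof
  show "G \<subseteq> adjoin K f"
  proof
    fix g assume g: "g \<in> G"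
    show "g \<in> adjoin K f"
    proof (cases "g = 0")
      case False
      with g have "inverse g \<in> R" "inverse g \<notin> P"
        using inverse_in_R G_subset_D by (auto simp: G_def)
      then obtain n u where "unit_mod_P u" "inverse g - t ^ n * u \<in> P"
        using cong_pow_mult_unit by blast
      then show ?thesis
        using in_adjoin_if_cong_pow_mult_unit g False by blast
    qed simp
  qed
qed (rule adjoin_subset_G)

end

theorem mainTheorem11:
  fixes D :: "'k::field set" and f :: 'k and P :: "'k set"
  assumes "is_subring_set D"
    and "E_simple D"
    and "f \<in> D" and "f \<notin> max_subfield D"
    and "is_pf D f P"
    and "DVR (ring_of (recip_compl D) Quot P)"
    and "ring_irreducible\<^bsub>ring_of (recip_compl D) Quot P\<^esub> (P +>\<^bsub>ring_of (recip_compl D)\<^esub> inverse f)"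
  shows "(\<forall>g \<in> D - {0}. inverse g \<notin> P \<longleftrightarrow> g \<in> adjoin (max_subfield D) f)
    \<and> recip_compl D = {a + b | a b. a \<in> recip_compl (adjoin (max_subfield D) f) \<and> b \<in> P}
    \<and> recip_compl (adjoin (max_subfield D) f) \<inter> P = {0}"
proof -
  have "f \<noteq> 0"
    using assms(4) unfolding max_subfield_def by blast
  interpret E_simple_DVR_setting D f P
    using assms \<open>f \<noteq> 0\<close> unfolding is_pf_def E_simple_DVR_setting_def by blast
  show ?thesis
    using R_eq_recip_compl_G_plus_P recip_compl_G_inter_P
    unfolding G_eq_adjoin[symmetric] by (auto simp: G_def)
qed

end
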